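(* Let $q\geq 2$ and $k$ be relatively prime natural numbers, and let \[ k=k_1+k_2q^{a_2}+\cdots+k_Nq^{a_N} \] be the base-$q$ expansion of $k$, where $0<a_2<\cdots<a_N$ and $1\le k_i<q$ (only nonzero digits listed). Then there exist $k', u\in\mathbb{N}$ such that $u>1$, $k\mid k'$, and the base-$q$ expansion of $k'$ is \[ k'=k_1+k_2q^{a_2'}+\cdots+k_Nq^{a_N'} \] (with $0<a_2'<\cdots<a_N'$), where $a_i'\equiv 1\pmod{u}$ for all $i\in\{2,\ldots,N\}$. *)

theory Defs
  imports "HOL-Number_Theory.Number_Theory"
begin

end

theory Submission
  imports Defs
begin

text \<open>Replace each exponent \<open>a\<close> by \<open>(m + 1)(a - 1) + 1 = a + m(a - 1)\<close> with \<open>m = \<phi>(k)\<close>.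
  By Euler's theorem \<open>q ^ m \<equiv> 1 (mod k)\<close>, so every power \<open>q ^ a\<close> and hence the whole
  digit sum keep their residue modulo \<open>k\<close>, i.e. the new number is again \<open>\<equiv> k \<equiv> 0\<close>;
  the map on exponents is strictly increasing on positive integers and its values
  are \<open>\<equiv> 1 (mod m + 1)\<close>.\<close>

lemma power_add_mult_cong:
  fixes q k m :: nat
  assumes "[q ^ m = 1] (mod k)"
  shows "[q ^ (e + m * t) = q ^ e] (mod k)"
proof -
  have "[q ^ e * (q ^ m) ^ t = q ^ e * 1 ^ t] (mod k)"
    by (intro cong_mult cong_pow assms cong_refl)
  then show ?thesis by (simp add: power_add power_mult)
qed

lemma digit_sum_cong:
  fixes q k c :: nat and d b b' :: "nat \<Rightarrow> nat"
  assumes "\<forall>i\<in>A. [q ^ b' i = q ^ b i] (mod k)"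
  shows "[c + (\<Sum>i\<in>A. d i * q ^ b' i) = c + (\<Sum>i\<in>A. d i * q ^ b i)] (mod k)"
  using assms by (intro cong_add cong_refl cong_sum cong_mult) auto

lemma stretch_exponent_eq:
  fixes u e :: nat
  assumes "0 < e"
  shows "(u + 1) * (e - 1) + 1 = e + u * (e - 1)"
  using assms by (cases e) (simp_all add: algebra_simps)

lemma stretch_exponent_cong_1:
  fixes u e :: nat
  shows "[u * (e - 1) + 1 = 1] (mod u)"
  unfolding cong_def by (rule mod_mult_self4)

lemma strict_mono_on_stretch_exponent:
  fixes u :: nat and a :: "'a::order \<Rightarrow> nat"
  assumes "0 < u" and "\<forall>i\<in>A. 0 < a i" and "strict_mono_on A a"
  shows "strict_mono_on A (\<lambda>i. u * (a i - 1) + 1)"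
proof (rule strict_mono_onI)
  fix r s assume rs: "r \<in> A" "s \<in> A" "r < s"
  then have "a r < a s" and "0 < a r"
    using assms(2,3) by (auto simp: strict_mono_on_def)
  then have "a r - 1 < a s - 1" by linarith
  then show "u * (a r - 1) + 1 < u * (a s - 1) + 1"
    using assms(1) by simp
qed

theorem lemma1:
  fixes q k N :: nat and kd a :: "nat \<Rightarrow> nat"
  assumes "q \<ge> 2" and "coprime q k" and "N \<ge> 1"
    and "\<forall>i\<in>{1..N}. 1 \<le> kd i \<and> kd i < q"
    and "\<forall>i\<in>{2..N}. 0 < a i"
    and "strict_mono_on {2..N} a"
    and "k = kd 1 + (\<Sum>i=2..N. kd i * q ^ a i)"
  shows "\<exists>k' u :: nat. \<exists>a' :: nat \<Rightarrow> nat. u > 1 \<and> k dvd k'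
           \<and> (\<forall>i\<in>{2..N}. 0 < a' i) \<and> strict_mono_on {2..N} a'
           \<and> k' = kd 1 + (\<Sum>i=2..N. kd i * q ^ a' i)
           \<and> (\<forall>i\<in>{2..N}. [a' i = 1] (mod u))"
proof -
  define m where "m = totient k"
  define a' where "a' = (\<lambda>i. (m + 1) * (a i - 1) + 1)"
  have "0 < k" using assms(3,4,7) by force
  then have "0 < m" by (simp add: m_def)
  have euler: "[q ^ m = 1] (mod k)"
    using euler_theorem[of q k] assms(2) by (simp add: m_def)
  have "\<forall>i\<in>{2..N}. [q ^ a' i = q ^ a i] (mod k)"
  proof
    fix i assume "i \<in> {2..N}"
    then have "a' i = a i + m * (a i - 1)"
      using assms(5) by (simp add: a'_def stretch_exponent_eq)
    then show "[q ^ a' i = q ^ a i] (mod k)"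
      using power_add_mult_cong[OF euler] by simp
  qed
  then have "[kd 1 + (\<Sum>i=2..N. kd i * q ^ a' i) = k] (mod k)"
    unfolding assms(7) by (rule digit_sum_cong)
  then have "k dvd kd 1 + (\<Sum>i=2..N. kd i * q ^ a' i)"
    by (simp add: cong_def mod_eq_0_iff_dvd)
  moreover have "strict_mono_on {2..N} a'"
    unfolding a'_def using assms(5,6) by (intro strict_mono_on_stretch_exponent) auto
  moreover have "\<forall>i\<in>{2..N}. [a' i = 1] (mod (m + 1))"
    unfolding a'_def using stretch_exponent_cong_1 by blast
  ultimately show ?thesis
    using \<open>0 < m\<close> by (intro exI[of _ "kd 1 + (\<Sum>i=2..N. kd i * q ^ a' i)"] exI[of _ "m + 1"]
        exI[of _ a']) (simp add: a'_def)
qed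

end
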